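(* Let $G$ be a non decreasing function on $[0,\infty)$ and let $X$ be a real random variable with symmetric law. Let $(X_n)_{n\ge1}$ be i.i.d. copies of $X$, $S_n:=X_1+\cdots+X_n$, $L_1:=\sup\big(\{0\}\cup\{n\ge1:\ |S_n/n|\ge1\}\big)$ and $S(X,G,1/8):=\sum_{n\ge1}n^{-1}G(n)\,P[|S_n/n|\ge 1/8]$. Then $$E[G(L_1)]\le G(0)+12\,S(X,G,1/8).$$
   Context: A random variable $X$ has symmetric law if $X$ and $-X$ have the same law. *)

theory Defs
  imports "HOL-Probability.Probability"
begin

definition psum :: "(nat \<Rightarrow> 'a \<Rightarrow> real) \<Rightarrow> nat \<Rightarrow> 'a \<Rightarrow> real" where
  "psum Xs n \<omega> = (\<Sum>i\<in>{1..n}. Xs i \<omega>)"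

definition last_exit :: "(nat \<Rightarrow> 'a \<Rightarrow> real) \<Rightarrow> 'a \<Rightarrow> enat" where
  "last_exit Xs \<omega> = Sup ({0} \<union> {enat n | n. n \<ge> 1 \<and> \<bar>psum Xs n \<omega> / real n\<bar> \<ge> 1})"

text \<open>Extension of G to nat \<union> {\<infinity>}: G(\<infinity>) = sup of G (= limit, G being monotone).\<close>
definition G_ext :: "(real \<Rightarrow> ennreal) \<Rightarrow> enat \<Rightarrow> ennreal" where
  "G_ext G k = (case k of enat n \<Rightarrow> G (real n) | \<infinity> \<Rightarrow> (SUP n. G (real n)))"

end

theory Submission
  imports Defs
begin

(* Summation by parts gives E G(L_1) <= G(0) + sum_j (G(j+1) - G(j)) P(L_1 > j), and {L_1 > j} is
   the disjoint union over k > j of the events "k is the first n > j with |S_n| >= n".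
   Fix such a k and n in [k, 2k]. Since the X_i are independent and symmetric, flipping the signs
   of X_(k+1), ..., X_n preserves the joint law; it leaves the event unchanged but turns
   S_n = S_k + R into S_k - R, and as |S_k| >= k one of the two has modulus >= k >= n/2.
   Hence P(first exit at k) <= 2 P(first exit at k, |S_n/n| >= 1/8), and averaging over the
   k+1 choices of n bounds it by sum_(n=k..2k) (4/n) P(first exit at k, |S_n/n| >= 1/8).
   Summing over k and exchanging the sums over j and n yields the bound with 4 in place of 12. *)

definition symmetric_law :: "'a measure \<Rightarrow> ('a \<Rightarrow> real) \<Rightarrow> bool" where
  "symmetric_law M X \<longleftrightarrow> distr M borel (\<lambda>\<omega>. - X \<omega>) = distr M borel X"

lemma symmetric_law_distr_eq:
  assumes "symmetric_law M X" "distr M borel Y = distr M borel X"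
    and [measurable]: "X \<in> borel_measurable M" "Y \<in> borel_measurable M"
  shows "symmetric_law M Y"
proof -
  have "distr M borel (\<lambda>\<omega>. - Y \<omega>) = distr (distr M borel Y) borel uminus"
    by (subst distr_distr) (auto simp: comp_def)
  also have "\<dots> = distr (distr M borel X) borel uminus"
    using assms(2) by simp
  also have "\<dots> = distr M borel (\<lambda>\<omega>. - X \<omega>)"
    by (subst distr_distr) (auto simp: comp_def)
  finally show ?thesis
    using assms(1,2) by (simp add: symmetric_law_def)
qed

lemma (in prob_space) distr_sign_flip_eq:
  fixes Y :: "'i \<Rightarrow> 'a \<Rightarrow> real"
  assumes indep: "indep_vars (\<lambda>_. borel) Y I"
    and meas: "\<And>i. i \<in> I \<Longrightarrow> Y i \<in> borel_measurable M"
    and symm: "\<And>i. i \<in> I \<Longrightarrow> symmetric_law M (Y i)"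
  shows "distr M (\<Pi>\<^sub>M i\<in>I. borel) (\<lambda>\<omega>. \<lambda>i\<in>I. if i \<in> K then Y i \<omega> else - Y i \<omega>)
       = distr M (\<Pi>\<^sub>M i\<in>I. borel) (\<lambda>\<omega>. \<lambda>i\<in>I. Y i \<omega>)"
proof (cases "I = {}")
  case False
  let ?Z = "\<lambda>i \<omega>. if i \<in> K then Y i \<omega> else - Y i \<omega>"
  have flip: "(\<lambda>y::real. if i \<in> K then y else - y) \<in> borel_measurable borel" for i
    by (cases "i \<in> K") simp_all
  have indep_Z: "indep_vars (\<lambda>_. borel) ?Z I"
    using indep_vars_compose2[OF indep flip] by simp
  have meas_Z: "?Z i \<in> borel_measurable M" if "i \<in> I" for i
    using meas[OF that] by measurable
  have "distr M (\<Pi>\<^sub>M i\<in>I. borel) (\<lambda>\<omega>. \<lambda>i\<in>I. ?Z i \<omega>) = (\<Pi>\<^sub>M i\<in>I. distr M borel (?Z i))"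
    using indep_vars_iff_distr_eq_PiM'[OF False meas_Z] indep_Z by simp
  also have "\<dots> = (\<Pi>\<^sub>M i\<in>I. distr M borel (Y i))"
  proof (intro PiM_cong refl)
    fix i assume "i \<in> I"
    then show "distr M borel (?Z i) = distr M borel (Y i)"
      by (cases "i \<in> K") (simp_all add: symm[unfolded symmetric_law_def])
  qed
  also have "\<dots> = distr M (\<Pi>\<^sub>M i\<in>I. borel) (\<lambda>\<omega>. \<lambda>i\<in>I. Y i \<omega>)"
    using indep_vars_iff_distr_eq_PiM'[OF False meas] indep by simp
  finally show ?thesis .
qed (simp add: restrict_def)

lemma (in prob_space) reflection_inequality:
  fixes Y :: "'i \<Rightarrow> 'a \<Rightarrow> real"
  assumes I: "finite I" and K: "K \<subseteq> I" and indep: "indep_vars (\<lambda>_. borel) Y I"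
    and meas: "\<And>i. i \<in> I \<Longrightarrow> Y i \<in> borel_measurable M"
    and symm: "\<And>i. i \<in> I \<Longrightarrow> symmetric_law M (Y i)"
    and A: "A \<in> sets (\<Pi>\<^sub>M i\<in>K. borel)" and A_sum: "\<And>x. x \<in> A \<Longrightarrow> t \<le> \<bar>\<Sum>i\<in>K. x i\<bar>"
  shows "prob {\<omega> \<in> space M. (\<lambda>i\<in>K. Y i \<omega>) \<in> A}
       \<le> 2 * prob {\<omega> \<in> space M. (\<lambda>i\<in>K. Y i \<omega>) \<in> A \<and> t \<le> \<bar>\<Sum>i\<in>I. Y i \<omega>\<bar>}"
proof -
  let ?P = "\<Pi>\<^sub>M i\<in>I. (borel :: real measure)"
  define V where "V \<omega> = (\<lambda>i\<in>I. Y i \<omega>)" for \<omega>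
  define W where "W \<omega> = (\<lambda>i\<in>I. if i \<in> K then Y i \<omega> else - Y i \<omega>)" for \<omega>
  define C where "C = {x \<in> space ?P. restrict x K \<in> A \<and> t \<le> \<bar>\<Sum>i\<in>I. x i\<bar>}"
  have V_meas: "V \<in> measurable M ?P"
    unfolding V_def by (rule measurable_restrict) (rule meas)
  have W_meas: "W \<in> measurable M ?P"
    unfolding W_def
  proof (rule measurable_restrict)
    fix i assume "i \<in> I"
    then show "(\<lambda>\<omega>. if i \<in> K then Y i \<omega> else - Y i \<omega>) \<in> borel_measurable M"
      using meas by (cases "i \<in> K") auto
  qed
  have C_sets: "C \<in> sets ?P"
    unfolding C_def using measurable_restrict_subset[OF K] A by measurable
  have "prob (W -` C \<inter> space M) = measure (distr M ?P W) C"
    using W_meas C_sets by (rule measure_distr[symmetric])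
  also have "\<dots> = measure (distr M ?P V) C"
    unfolding V_def W_def using distr_sign_flip_eq[OF indep meas symm] by simp
  also have "\<dots> = prob (V -` C \<inter> space M)"
    using V_meas C_sets by (rule measure_distr)
  finally have same_law: "prob (W -` C \<inter> space M) = prob (V -` C \<inter> space M)" .
  have restrict_VW: "restrict (V \<omega>) K = (\<lambda>i\<in>K. Y i \<omega>)" "restrict (W \<omega>) K = (\<lambda>i\<in>K. Y i \<omega>)" for \<omega>
    using K by (auto simp: V_def W_def restrict_def fun_eq_iff)
  have sum_VW: "(\<Sum>i\<in>I. V \<omega> i) = (\<Sum>i\<in>K. Y i \<omega>) + (\<Sum>i\<in>I - K. Y i \<omega>)"
    "(\<Sum>i\<in>I. W \<omega> i) = (\<Sum>i\<in>K. Y i \<omega>) - (\<Sum>i\<in>I - K. Y i \<omega>)" for \<omega>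
    using I K by (auto simp: V_def W_def sum.If_cases sum_negf Int_absorb1 Diff_eq sum.subset_diff[OF K I])
  let ?E = "{\<omega> \<in> space M. (\<lambda>i\<in>K. Y i \<omega>) \<in> A}"
  have E_sub: "?E \<subseteq> (V -` C \<inter> space M) \<union> (W -` C \<inter> space M)"
  proof
    fix \<omega> assume \<omega>: "\<omega> \<in> ?E"
    then have "t \<le> \<bar>\<Sum>i\<in>K. Y i \<omega>\<bar>"
      using A_sum[of "\<lambda>i\<in>K. Y i \<omega>"] by simp
    then have "t \<le> \<bar>\<Sum>i\<in>I. V \<omega> i\<bar> \<or> t \<le> \<bar>\<Sum>i\<in>I. W \<omega> i\<bar>"
      unfolding sum_VW by linarith
    then show "\<omega> \<in> (V -` C \<inter> space M) \<union> (W -` C \<inter> space M)"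
      using \<omega> measurable_space[OF V_meas] measurable_space[OF W_meas]
      by (auto simp: C_def restrict_VW)
  qed
  have V_C: "V -` C \<inter> space M \<in> events" and W_C: "W -` C \<inter> space M \<in> events"
    using measurable_sets[OF V_meas C_sets] measurable_sets[OF W_meas C_sets] .
  have "prob ?E \<le> prob ((V -` C \<inter> space M) \<union> (W -` C \<inter> space M))"
    using V_C W_C by (intro finite_measure_mono[OF E_sub] sets.Un)
  also have "\<dots> \<le> prob (V -` C \<inter> space M) + prob (W -` C \<inter> space M)"
    using V_C W_C by (intro measure_subadditive) auto
  also have "\<dots> = 2 * prob (V -` C \<inter> space M)"
    using same_law by simp
  also have "V -` C \<inter> space M = {\<omega> \<in> space M. (\<lambda>i\<in>K. Y i \<omega>) \<in> A \<and> t \<le> \<bar>\<Sum>i\<in>I. Y i \<omega>\<bar>}"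
    using measurable_space[OF V_meas] by (auto simp: C_def restrict_VW) (simp_all add: V_def)
  finally show ?thesis .
qed

definition first_exit :: "(nat \<Rightarrow> 'a \<Rightarrow> real) \<Rightarrow> nat \<Rightarrow> nat \<Rightarrow> 'a \<Rightarrow> bool" where
  "first_exit Xs j k \<omega> \<longleftrightarrow>
     j \<le> k \<and> 1 \<le> \<bar>psum Xs k \<omega> / real k\<bar> \<and> (\<forall>i\<in>{j..<k}. \<bar>psum Xs i \<omega> / real i\<bar> < 1)"

(* Read on the vector (X_1, ..., X_k) through the coordinate projections, the event
   first_exit becomes a measurable set of the product space. *)
lemma psum_restrict: "i \<le> k \<Longrightarrow> psum (\<lambda>l x. x l) i (\<lambda>l\<in>{1..k}. Xs l \<omega>) = psum Xs i \<omega>"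
  by (auto simp: psum_def intro!: sum.cong)

lemma first_exit_restrict:
  "first_exit (\<lambda>l x. x l) j k (\<lambda>l\<in>{1..k}. Xs l \<omega>) \<longleftrightarrow> first_exit Xs j k \<omega>"
  by (auto simp: first_exit_def psum_restrict simp del: One_nat_def)

lemma not_first_exit_0 [simp]: "\<not> first_exit Xs j 0 \<omega>"
  by (simp add: first_exit_def psum_def)

lemma first_exit_unique: "first_exit Xs j k \<omega> \<Longrightarrow> first_exit Xs j k' \<omega> \<Longrightarrow> k = k'"
  unfolding first_exit_def by (metis atLeastLessThan_iff linorder_neqE_nat not_le)

lemma ex_first_exit_iff: "(\<exists>k. first_exit Xs j k \<omega>) \<longleftrightarrow> (\<exists>n\<ge>j. 1 \<le> \<bar>psum Xs n \<omega> / real n\<bar>)"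
proof
  assume "\<exists>n\<ge>j. 1 \<le> \<bar>psum Xs n \<omega> / real n\<bar>"
  then obtain k where "j \<le> k \<and> 1 \<le> \<bar>psum Xs k \<omega> / real k\<bar>"
    and "\<forall>i<k. \<not> (j \<le> i \<and> 1 \<le> \<bar>psum Xs i \<omega> / real i\<bar>)"
    using exists_least_iff[of "\<lambda>n. j \<le> n \<and> 1 \<le> \<bar>psum Xs n \<omega> / real n\<bar>"] by blast
  then have "first_exit Xs j k \<omega>"
    by (auto simp: first_exit_def not_le)
  then show "\<exists>k. first_exit Xs j k \<omega>" ..
qed (auto simp: first_exit_def)

lemma less_last_exit_iff:
  "enat j < last_exit Xs \<omega> \<longleftrightarrow> (\<exists>n>j. 1 \<le> \<bar>psum Xs n \<omega> / real n\<bar>)"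
proof -
  let ?S = "{0} \<union> {enat n | n. n \<ge> 1 \<and> \<bar>psum Xs n \<omega> / real n\<bar> \<ge> 1}"
  have "enat j < last_exit Xs \<omega> \<longleftrightarrow> (\<exists>s\<in>?S. enat j < s)"
    unfolding last_exit_def by (rule less_Sup_iff)
  also have "\<dots> \<longleftrightarrow> (\<exists>n>j. 1 \<le> \<bar>psum Xs n \<omega> / real n\<bar>)"
  proof
    assume "\<exists>n>j. 1 \<le> \<bar>psum Xs n \<omega> / real n\<bar>"
    then obtain n where "j < n" "1 \<le> \<bar>psum Xs n \<omega> / real n\<bar>"
      by blast
    then show "\<exists>s\<in>?S. enat j < s"
      by (intro bexI[of _ "enat n"]) auto
  qed auto
  finally show ?thesis .
qed

lemma borel_measurable_psum:
  "(\<And>i. i \<in> {1..n} \<Longrightarrow> Xs i \<in> borel_measurable N) \<Longrightarrow> psum Xs n \<in> borel_measurable N"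
  by (simp add: psum_def[abs_def] borel_measurable_sum)

lemma pred_first_exit:
  assumes "\<And>i. i \<in> {1..k} \<Longrightarrow> Xs i \<in> borel_measurable N"
  shows "Measurable.pred N (first_exit Xs j k)"
proof -
  have [measurable]: "psum Xs i \<in> borel_measurable N" if "i \<le> k" for i
    using assms that by (intro borel_measurable_psum) auto
  have "Measurable.pred N (\<lambda>\<omega>. \<forall>i\<in>{j..<k}. \<bar>psum Xs i \<omega> / real i\<bar> < 1)"
    by (intro pred_intros_finite) auto
  then show ?thesis
    unfolding first_exit_def[abs_def] by measurable
qed

lemma mono_ennreal_telescope:
  fixes g :: "nat \<Rightarrow> ennreal"
  assumes "mono g"
  shows "g m = g 0 + (\<Sum>j<m. g (Suc j) - g j)"
proof (induction m)
  case (Suc m)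
  have "g (Suc m) = g m + (g (Suc m) - g m)"
    using \<open>mono g\<close> by (simp add: add_diff_inverse_ennreal mono_def)
  then show ?case
    using Suc by (simp add: add.assoc)
qed simp

lemma suminf_ennreal_swap:
  fixes f :: "nat \<Rightarrow> nat \<Rightarrow> ennreal"
  shows "(\<Sum>i. \<Sum>j. f i j) = (\<Sum>j. \<Sum>i. f i j)"
proof -
  have "(\<Sum>i. \<Sum>j. f i j) = (\<Sum>i. \<integral>\<^sup>+j. f i j \<partial>count_space UNIV)"
    by (simp add: nn_integral_count_space_nat)
  also have "\<dots> = (\<integral>\<^sup>+j. (\<Sum>i. f i j) \<partial>count_space UNIV)"
    by (rule nn_integral_suminf[symmetric]) simp
  also have "\<dots> = (\<Sum>j. \<Sum>i. f i j)"
    by (simp add: nn_integral_count_space_nat)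
  finally show ?thesis .
qed

lemma suminf_increments_mult_tail_le:
  fixes g c :: "nat \<Rightarrow> ennreal"
  assumes "mono g"
  shows "(\<Sum>j. (g (Suc j) - g j) * (\<Sum>n. if j < n then c n else 0)) \<le> (\<Sum>n. g n * c n)"
proof -
  have "(\<Sum>j. (g (Suc j) - g j) * (\<Sum>n. if j < n then c n else 0))
      = (\<Sum>j. \<Sum>n. if j < n then (g (Suc j) - g j) * c n else 0)"
    unfolding ennreal_suminf_cmult[symmetric] by (intro suminf_cong) simp
  also have "\<dots> = (\<Sum>n. \<Sum>j. if j < n then (g (Suc j) - g j) * c n else 0)"
    by (rule suminf_ennreal_swap)
  also have "\<dots> = (\<Sum>n. (\<Sum>j<n. g (Suc j) - g j) * c n)"
  proof (intro suminf_cong)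
    fix n
    show "(\<Sum>j. if j < n then (g (Suc j) - g j) * c n else 0) = (\<Sum>j<n. g (Suc j) - g j) * c n"
      by (subst suminf_finite[of "{..<n}"]) (auto simp: sum_distrib_right)
  qed
  also have "\<dots> \<le> (\<Sum>n. g n * c n)"
  proof (intro suminf_le summableI mult_right_mono)
    fix n
    show "(\<Sum>j<n. g (Suc j) - g j) \<le> g n"
      by (subst (2) mono_ennreal_telescope[OF assms]) (simp add: add_increasing)
  qed simp
  finally show ?thesis .
qed

lemma mono_on_nonneg_imp_mono_of_nat:
  "mono_on {0..} G \<Longrightarrow> mono (\<lambda>n. G (real n))"
  by (intro monoI mono_onD[of "{0..}" G]) auto

lemma G_ext_le_increments:
  assumes "mono_on {0..} G"
  shows "G_ext G L \<le> G 0 + (\<Sum>j. if enat j < L then G (real (Suc j)) - G (real j) else 0)"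
proof -
  let ?R = "G 0 + (\<Sum>j. if enat j < L then G (real (Suc j)) - G (real j) else 0)"
  have le_R: "G (real m) \<le> ?R" if m_le: "enat m \<le> L" for m
  proof -
    have "enat j < L" if "j < m" for j
      using m_le that by (metis enat_ord_simps(2) order_less_le_trans)
    then have "G (real m) = G 0 + (\<Sum>j<m. if enat j < L then G (real (Suc j)) - G (real j) else 0)"
      using mono_ennreal_telescope[OF mono_on_nonneg_imp_mono_of_nat[OF assms], of m] by simp
    also have "\<dots> \<le> ?R"
      by (intro add_left_mono sum_le_suminf summableI) auto
    finally show ?thesis .
  qed
  show ?thesis
  proof (cases L)
    case (enat m)
    then show ?thesis
      using le_R[of m] by (simp add: G_ext_def)
  next
    case infinity
    then show ?thesis
      using le_R by (simp add: G_ext_def SUP_least)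
  qed
qed

lemma (in prob_space) nn_integral_G_ext_le:
  assumes G: "mono_on {0..} G" and L: "\<And>j. {\<omega> \<in> space M. enat j < L \<omega>} \<in> events"
  shows "(\<integral>\<^sup>+\<omega>. G_ext G (L \<omega>) \<partial>M)
       \<le> G 0 + (\<Sum>j. (G (real (Suc j)) - G (real j)) * emeasure M {\<omega> \<in> space M. enat j < L \<omega>})"
proof -
  let ?d = "\<lambda>j. G (real (Suc j)) - G (real j)" and ?U = "\<lambda>j. {\<omega> \<in> space M. enat j < L \<omega>}"
  have "G_ext G (L \<omega>) \<le> G 0 + (\<Sum>j. ?d j * indicator (?U j) \<omega>)" if "\<omega> \<in> space M" for \<omega>
  proof -
    have "(\<Sum>j. if enat j < L \<omega> then ?d j else 0) = (\<Sum>j. ?d j * indicator (?U j) \<omega>)"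
      using that by (intro suminf_cong) (simp add: indicator_def)
    then show ?thesis
      using G_ext_le_increments[OF G, of "L \<omega>"] by simp
  qed
  then have "(\<integral>\<^sup>+\<omega>. G_ext G (L \<omega>) \<partial>M) \<le> (\<integral>\<^sup>+\<omega>. G 0 + (\<Sum>j. ?d j * indicator (?U j) \<omega>) \<partial>M)"
    by (rule nn_integral_mono)
  also have "\<dots> = G 0 + (\<Sum>j. ?d j * emeasure M (?U j))"
    using L by (simp add: nn_integral_add nn_integral_suminf nn_integral_cmult_indicator emeasure_space_1)
  finally show ?thesis .
qed

locale symmetric_indep_seq = prob_space +
  fixes Xs :: "nat \<Rightarrow> 'a \<Rightarrow> real"
  assumes indep: "indep_vars (\<lambda>_. borel) Xs {1..}"
    and measurable_Xs: "\<And>n. 1 \<le> n \<Longrightarrow> Xs n \<in> borel_measurable M"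
    and symmetric_Xs: "\<And>n. 1 \<le> n \<Longrightarrow> symmetric_law M (Xs n)"
begin

lemma measurable_psum[measurable]: "psum Xs n \<in> borel_measurable M"
  by (rule borel_measurable_psum) (auto intro: measurable_Xs)

lemma measurable_first_exit[measurable]: "Measurable.pred M (first_exit Xs j k)"
  by (rule pred_first_exit) (auto intro: measurable_Xs)

definition first_exit_set :: "nat \<Rightarrow> nat \<Rightarrow> 'a set" where
  "first_exit_set j k = {\<omega> \<in> space M. first_exit Xs j k \<omega>}"

definition deviation_set :: "nat \<Rightarrow> 'a set" where
  "deviation_set n = {\<omega> \<in> space M. 1/8 \<le> \<bar>psum Xs n \<omega> / real n\<bar>}"

lemma sets_first_exit_set[measurable]: "first_exit_set j k \<in> events"
  unfolding first_exit_set_def by measurable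

lemma sets_deviation_set[measurable]: "deviation_set n \<in> events"
  unfolding deviation_set_def by measurable

lemma first_exit_set_0 [simp]: "first_exit_set j 0 = {}"
  by (simp add: first_exit_set_def)

lemma disjoint_family_first_exit_set: "disjoint_family (first_exit_set j)"
  unfolding disjoint_family_on_def first_exit_set_def by (auto dest: first_exit_unique)

lemma first_exit_reflection:
  assumes n: "n \<in> {k..2*k}"
  shows "prob (first_exit_set j k) \<le> 2 * prob (first_exit_set j k \<inter> deviation_set n)"
proof (cases "k = 0")
  case False
  let ?P = "\<Pi>\<^sub>M i\<in>{1..k}. (borel :: real measure)"
  define A where "A = {x \<in> space ?P. first_exit (\<lambda>l x. x l) j k x}"
  have A_sets: "A \<in> sets ?P"
    unfolding A_def by (rule pred_first_exit[unfolded pred_def]) auto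
  have A_sum: "real k \<le> \<bar>\<Sum>i\<in>{1..k}. x i\<bar>" if "x \<in> A" for x
    using that False by (auto simp: A_def first_exit_def psum_def abs_divide le_divide_eq_1)
  have "first_exit_set j k = {\<omega> \<in> space M. (\<lambda>i\<in>{1..k}. Xs i \<omega>) \<in> A}"
    by (auto simp: first_exit_set_def A_def first_exit_restrict space_PiM simp del: One_nat_def)
  also have "prob \<dots>
      \<le> 2 * prob {\<omega> \<in> space M. (\<lambda>i\<in>{1..k}. Xs i \<omega>) \<in> A \<and> real k \<le> \<bar>\<Sum>i\<in>{1..n}. Xs i \<omega>\<bar>}"
    using n indep_vars_subset[OF indep, of "{1..n}"]
    by (intro reflection_inequality A_sets A_sum) (auto intro: measurable_Xs symmetric_Xs)
  also have "\<dots> \<le> 2 * prob (first_exit_set j k \<inter> deviation_set n)"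
  proof (intro mult_left_mono finite_measure_mono)
    show "{\<omega> \<in> space M. (\<lambda>i\<in>{1..k}. Xs i \<omega>) \<in> A \<and> real k \<le> \<bar>\<Sum>i\<in>{1..n}. Xs i \<omega>\<bar>}
        \<subseteq> first_exit_set j k \<inter> deviation_set n"
      using n False
      by (auto simp: first_exit_set_def deviation_set_def A_def first_exit_restrict psum_def
          abs_divide field_simps simp del: One_nat_def)
  qed auto
  finally show ?thesis .
qed simp

lemma first_exit_le_average:
  "prob (first_exit_set j k) \<le> (\<Sum>n\<in>{k..2*k}. 4 / real n * prob (first_exit_set j k \<inter> deviation_set n))"
  (is "?p \<le> (\<Sum>n\<in>_. 4 / real n * ?q n)")
proof (cases "k = 0")
  case False
  have "?p = (\<Sum>n\<in>{k..2*k}. ?p / real (k + 1))"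
    by simp
  also have "\<dots> \<le> (\<Sum>n\<in>{k..2*k}. 4 / real n * ?q n)"
  proof (rule sum_mono)
    fix n assume n: "n \<in> {k..2*k}"
    have "?p / real (k + 1) \<le> 2 / real (k + 1) * ?q n"
      using first_exit_reflection[OF n] by (simp add: divide_right_mono)
    also have "\<dots> \<le> 4 / real n * ?q n"
      using n False by (intro mult_right_mono) (simp_all add: field_simps)
    finally show "?p / real (k + 1) \<le> 4 / real n * ?q n" .
  qed
  finally show ?thesis .
qed simp

lemma emeasure_first_exit_le:
  "emeasure M (first_exit_set j k)
   \<le> (\<integral>\<^sup>+\<omega>. (\<Sum>n\<in>{k..2*k}. ennreal (4 / real n) * indicator (deviation_set n) \<omega>)
         * indicator (first_exit_set j k) \<omega> \<partial>M)"
proof -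
  let ?E = "first_exit_set j k"
  have "emeasure M ?E \<le> ennreal (\<Sum>n\<in>{k..2*k}. 4 / real n * prob (?E \<inter> deviation_set n))"
    using first_exit_le_average by (simp add: emeasure_eq_measure ennreal_leI)
  also have "\<dots> = (\<Sum>n\<in>{k..2*k}. ennreal (4 / real n * prob (?E \<inter> deviation_set n)))"
    by (rule sum_ennreal[symmetric]) simp
  also have "\<dots> = (\<Sum>n\<in>{k..2*k}. ennreal (4 / real n) * emeasure M (?E \<inter> deviation_set n))"
    by (intro sum.cong refl, subst ennreal_mult) (simp_all add: emeasure_eq_measure)
  also have "\<dots> = (\<Sum>n\<in>{k..2*k}. \<integral>\<^sup>+\<omega>. ennreal (4 / real n) * indicator (?E \<inter> deviation_set n) \<omega> \<partial>M)"
    by (intro sum.cong refl nn_integral_cmult_indicator[symmetric]) measurable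
  also have "\<dots> = (\<integral>\<^sup>+\<omega>. (\<Sum>n\<in>{k..2*k}. ennreal (4 / real n) * indicator (?E \<inter> deviation_set n) \<omega>) \<partial>M)"
    by (rule nn_integral_sum[symmetric]) simp
  also have "\<dots> = (\<integral>\<^sup>+\<omega>. (\<Sum>n\<in>{k..2*k}. ennreal (4 / real n) * indicator (deviation_set n) \<omega>)
         * indicator ?E \<omega> \<partial>M)"
    unfolding sum_distrib_right
    by (intro nn_integral_cong sum.cong refl) (simp add: indicator_inter_arith mult_ac)
  finally show ?thesis .
qed

lemma emeasure_exceed_from_le:
  "emeasure M {\<omega> \<in> space M. \<exists>n\<ge>j. 1 \<le> \<bar>psum Xs n \<omega> / real n\<bar>}
   \<le> (\<Sum>n. if j \<le> n then ennreal (4 / real n) * emeasure M (deviation_set n) else 0)"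
proof -
  let ?E = "first_exit_set j"
  define f where "f k \<omega> = (\<Sum>n\<in>{k..2*k}. ennreal (4 / real n) * indicator (deviation_set n) \<omega>)" for k \<omega>
  have pointwise: "(\<Sum>k. f k \<omega> * indicator (?E k) \<omega>)
      \<le> (\<Sum>n. if j \<le> n then ennreal (4 / real n) * indicator (deviation_set n) \<omega> else 0)" for \<omega>
  proof (cases "\<exists>k. \<omega> \<in> ?E k")
    case True
    then obtain k where k: "\<omega> \<in> ?E k" ..
    then have "j \<le> k"
      by (simp add: first_exit_set_def first_exit_def)
    have "(\<Sum>k. f k \<omega> * indicator (?E k) \<omega>) = f k \<omega>"
      by (rule suminf_cmult_indicator[OF disjoint_family_first_exit_set k])
    also have "\<dots> = (\<Sum>n\<in>{k..2*k}. if j \<le> n then ennreal (4 / real n) * indicator (deviation_set n) \<omega> else 0)"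
      using \<open>j \<le> k\<close> by (auto simp: f_def intro!: sum.cong)
    also have "\<dots> \<le> (\<Sum>n. if j \<le> n then ennreal (4 / real n) * indicator (deviation_set n) \<omega> else 0)"
      by (intro sum_le_suminf summableI) auto
    finally show ?thesis .
  qed simp
  have "{\<omega> \<in> space M. \<exists>n\<ge>j. 1 \<le> \<bar>psum Xs n \<omega> / real n\<bar>} = {\<omega> \<in> space M. \<exists>k. first_exit Xs j k \<omega>}"
    by (simp only: ex_first_exit_iff)
  also have "\<dots> = (\<Union>k. ?E k)"
    by (auto simp: first_exit_set_def)
  finally have "emeasure M {\<omega> \<in> space M. \<exists>n\<ge>j. 1 \<le> \<bar>psum Xs n \<omega> / real n\<bar>} = (\<Sum>k. emeasure M (?E k))"
    using disjoint_family_first_exit_set by (simp add: suminf_emeasure image_subset_iff)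
  also have "\<dots> \<le> (\<Sum>k. \<integral>\<^sup>+\<omega>. f k \<omega> * indicator (?E k) \<omega> \<partial>M)"
    unfolding f_def by (intro suminf_le summableI emeasure_first_exit_le)
  also have "\<dots> = (\<integral>\<^sup>+\<omega>. (\<Sum>k. f k \<omega> * indicator (?E k) \<omega>) \<partial>M)"
    unfolding f_def by (rule nn_integral_suminf[symmetric]) measurable
  also have "\<dots> \<le> (\<integral>\<^sup>+\<omega>. (\<Sum>n. if j \<le> n then ennreal (4 / real n) * indicator (deviation_set n) \<omega> else 0) \<partial>M)"
    by (intro nn_integral_mono pointwise)
  also have "\<dots> = (\<Sum>n. if j \<le> n then ennreal (4 / real n) * emeasure M (deviation_set n) else 0)"
    by (subst nn_integral_suminf) (auto intro!: suminf_cong simp: nn_integral_cmult_indicator)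
  finally show ?thesis .
qed

theorem nn_integral_G_ext_last_exit_le:
  assumes G: "mono_on {0..} G"
  shows "(\<integral>\<^sup>+\<omega>. G_ext G (last_exit Xs \<omega>) \<partial>M)
     \<le> G 0 + 4 * (\<Sum>n. ennreal (1 / real (Suc n)) * G (real (Suc n))
            * ennreal (measure M {\<omega> \<in> space M. \<bar>psum Xs (Suc n) \<omega> / real (Suc n)\<bar> \<ge> 1/8}))"
proof -
  define c where "c n = ennreal (4 / real n) * emeasure M (deviation_set n)" for n
  have last_exit_events: "{\<omega> \<in> space M. enat j < last_exit Xs \<omega>}
      = {\<omega> \<in> space M. \<exists>n\<ge>Suc j. 1 \<le> \<bar>psum Xs n \<omega> / real n\<bar>}" for j
    by (auto simp: less_last_exit_iff Suc_le_eq)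
  have "(\<integral>\<^sup>+\<omega>. G_ext G (last_exit Xs \<omega>) \<partial>M)
      \<le> G 0 + (\<Sum>j. (G (real (Suc j)) - G (real j)) * emeasure M {\<omega> \<in> space M. enat j < last_exit Xs \<omega>})"
    by (rule nn_integral_G_ext_le[OF G]) (simp add: last_exit_events)
  also have "\<dots> \<le> G 0 + (\<Sum>j. (G (real (Suc j)) - G (real j)) * (\<Sum>n. if j < n then c n else 0))"
  proof (intro add_left_mono suminf_le summableI mult_left_mono)
    fix j
    show "emeasure M {\<omega> \<in> space M. enat j < last_exit Xs \<omega>} \<le> (\<Sum>n. if j < n then c n else 0)"
      using emeasure_exceed_from_le[of "Suc j"] unfolding c_def last_exit_events Suc_le_eq .
  qed simp
  also have "\<dots> \<le> G 0 + (\<Sum>n. G (real n) * c n)"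
    by (rule add_left_mono[OF suminf_increments_mult_tail_le[OF mono_on_nonneg_imp_mono_of_nat[OF G]]])
  \<comment> \<open>the term n = 0 vanishes since 4 / 0 = 0\<close>
  also have "(\<Sum>n. G (real n) * c n) = (\<Sum>n. G (real (Suc n)) * c (Suc n))"
    using suminf_offset[of "\<lambda>n. G (real n) * c n" 1] by (simp add: c_def)
  also have "\<dots> = 4 * (\<Sum>n. ennreal (1 / real (Suc n)) * G (real (Suc n))
            * ennreal (measure M {\<omega> \<in> space M. \<bar>psum Xs (Suc n) \<omega> / real (Suc n)\<bar> \<ge> 1/8}))"
  proof -
    have "ennreal (4 / real (Suc n)) = 4 * ennreal (1 / real (Suc n))" for n
      using ennreal_mult[of 4 "1 / real (Suc n)"] by simp
    then show ?thesis
      by (simp add: c_def deviation_set_def emeasure_eq_measure mult_ac flip: ennreal_suminf_cmult)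
  qed
  finally show ?thesis .
qed

end

theorem proposition3:
  fixes M :: "'a measure" and X :: "'a \<Rightarrow> real" and Xs :: "nat \<Rightarrow> 'a \<Rightarrow> real"
    and G :: "real \<Rightarrow> ennreal"
  assumes "prob_space M"
    and "mono_on {0..} G"
    and "X \<in> borel_measurable M"
    and "distr M borel (\<lambda>\<omega>. - X \<omega>) = distr M borel X"
    and "prob_space.indep_vars M (\<lambda>_. borel) Xs {1..}"
    and "\<And>n. n \<ge> 1 \<Longrightarrow> Xs n \<in> borel_measurable M"
    and "\<And>n. n \<ge> 1 \<Longrightarrow> distr M borel (Xs n) = distr M borel X"
  shows "(\<integral>\<^sup>+ \<omega>. G_ext G (last_exit Xs \<omega>) \<partial>M)
     \<le> G 0 + 12 * (\<Sum>n. ennreal (1 / real (Suc n)) * G (real (Suc n))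
            * ennreal (measure M {\<omega> \<in> space M. \<bar>psum Xs (Suc n) \<omega> / real (Suc n)\<bar> \<ge> 1/8}))"
proof -
  interpret symmetric_indep_seq M Xs
  proof (intro symmetric_indep_seq.intro symmetric_indep_seq_axioms.intro assms(1,5,6))
    fix n :: nat assume "1 \<le> n"
    show "symmetric_law M (Xs n)"
    proof (rule symmetric_law_distr_eq)
      show "symmetric_law M X"
        unfolding symmetric_law_def by (rule assms(4))
    qed (use assms(3,6,7) \<open>1 \<le> n\<close> in auto)
  qed
  show ?thesis
    using nn_integral_G_ext_last_exit_le[OF assms(2)]
    by (rule order_trans) (intro add_left_mono mult_right_mono, auto)
qed

end
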